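(* Let $p\geq 5$ be a prime and $r$ a positive integer such that $3$ does not divide $p^r+1$. Then the function $A(x)=x^{p^r+2}$ on $\mathbb{F}_{p^{2r}}$ is not EA-equivalent to $x^3$.
   Context: An additive function on $\mathbb{F}_{q}$ is one satisfying $L(x+y)=L(x)+L(y)$ for all $x,y$; an affine function is an additive function plus a constant. Two functions $f_1,f_2:\mathbb{F}_{q}\to\mathbb{F}_{q}$ are extended affine (EA) equivalent if there exist affine functions $l_1,l_2,l_3$ with $l_1,l_2$ permutations of $\mathbb{F}_{q}$ such that $f_1(x)=l_1(f_2(l_2(x)))+l_3(x)$ for all $x$. *)

theory Defs
  imports Main "HOL-Computational_Algebra.Primes"
begin

definition additive :: "('a::field \<Rightarrow> 'a) \<Rightarrow> bool" where
  "additive L \<longleftrightarrow> (\<forall>x y. L (x + y) = L x + L y)"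

definition affine :: "('a::field \<Rightarrow> 'a) \<Rightarrow> bool" where
  "affine l \<longleftrightarrow> (\<exists>L c. additive L \<and> (\<forall>x. l x = L x + c))"

definition EA_equivalent :: "('a::field \<Rightarrow> 'a) \<Rightarrow> ('a \<Rightarrow> 'a) \<Rightarrow> bool" where
  "EA_equivalent f1 f2 \<longleftrightarrow>
     (\<exists>l1 l2 l3. affine l1 \<and> affine l2 \<and> affine l3 \<and> bij l1 \<and> bij l2 \<and>
        (\<forall>x. f1 x = l1 (f2 (l2 x)) + l3 x))"

end

theory Submission
  imports Defs "HOL-Number_Theory.Residues" "HOL-Computational_Algebra.Polynomial"
begin

(* The third difference of an EA-transform of x^3 has the shape L1 (6 * L2 a * L2 b * L2 c) with
   additive L1, L2, so as a function of (a, b) it only depends on the product L2 a * L2 b.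
   For f x = x^(Q+2) with Q = p^r the Frobenius x |-> x^Q is additive, and the third difference
   is 2 (a^Q b c + b^Q a c + c^Q a b).  As c and c^Q are linearly independent functions on a field
   with Q^2 elements, b |-> L2 1 * L2 b is injective, hence onto.  The b it sends to
   L2 g * L2 (1/g) then satisfies b = 1 and b + b^Q = t + 1/t with t = g^(Q-1), forcing t = 1,
   i.e. g^Q = g, which fails for g outside the subfield of order Q. *)

lemma additive_add: "Defs.additive L \<Longrightarrow> L (x + y) = L x + L y"
  unfolding Defs.additive_def by blast

lemma additive_zero: "Defs.additive L \<Longrightarrow> L 0 = 0"
  by (metis additive_add add_0 add_cancel_right_right)

lemma additive_diff: "Defs.additive L \<Longrightarrow> L (x - y) = L x - L y"
  by (metis additive_add diff_add_cancel eq_diff_eq)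

definition third_difference :: "('a::ab_group_add \<Rightarrow> 'b::ab_group_add) \<Rightarrow> 'a \<Rightarrow> 'a \<Rightarrow> 'a \<Rightarrow> 'b" where
  "third_difference f a b c =
     f (a + b + c) - f (a + b) - f (a + c) - f (b + c) + f a + f b + f c - f 0"

lemma third_difference_add:
  "third_difference (\<lambda>x. f x + g x) a b c = third_difference f a b c + third_difference g a b c"
  unfolding third_difference_def by (simp add: algebra_simps)

lemma third_difference_const: "third_difference (\<lambda>_. k) a b c = 0"
  unfolding third_difference_def by simp

lemma third_difference_additive: "Defs.additive L \<Longrightarrow> third_difference L a b c = 0"
  unfolding third_difference_def by (simp add: additive_add additive_zero)

lemma third_difference_comp_additive:
  assumes "Defs.additive L1" and "Defs.additive L2"
  shows "third_difference (\<lambda>x. L1 (h (L2 x))) a b c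
           = L1 (third_difference h (L2 a) (L2 b) (L2 c))"
  unfolding third_difference_def
  by (simp add: assms additive_add additive_diff additive_zero)

lemma third_difference_shifted_cube:
  fixes d :: "'a::comm_ring_1"
  shows "third_difference (\<lambda>y. (y + d) ^ 3) a b c = 6 * (a * b * c)"
  unfolding third_difference_def by (simp add: power3_eq_cube algebra_simps)

lemma third_difference_frobenius_twisted:
  fixes a b c :: "'a::comm_ring_1"
  assumes frob: "\<And>x y::'a. (x + y) ^ Q = x ^ Q + y ^ Q"
  shows "third_difference (\<lambda>x. x ^ (Q + 2)) a b c
           = 2 * (a ^ Q * b * c + b ^ Q * a * c + c ^ Q * a * b)"
proof -
  have "(0::'a) ^ Q = 0"
    using frob[of 0 0] by simp
  then show ?thesis
    unfolding third_difference_def power_add frob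
    by (simp add: power2_eq_square algebra_simps)
qed

lemma EA_equivalent_cube_third_difference:
  fixes f :: "'a::field \<Rightarrow> 'a"
  assumes "EA_equivalent f (\<lambda>x. x ^ 3)"
  obtains L1 L2 :: "'a \<Rightarrow> 'a"
  where "\<And>a b c. third_difference f a b c = L1 (6 * (L2 a * L2 b * L2 c))"
proof -
  obtain l1 l2 l3 where "affine l1" "affine l2" "affine l3"
    and f_eq: "\<And>x. f x = l1 (l2 x ^ 3) + l3 x"
    using assms unfolding EA_equivalent_def by blast
  then obtain L1 L2 L3 c1 d c3
    where L: "Defs.additive L1" "Defs.additive L2" "Defs.additive L3"
      and "\<And>x. l1 x = L1 x + c1" "\<And>x. l2 x = L2 x + d" "\<And>x. l3 x = L3 x + c3"
    unfolding affine_def by metis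
  then have f_eq': "f = (\<lambda>x. L1 ((L2 x + d) ^ 3) + (L3 x + (c1 + c3)))"
    by (simp add: f_eq fun_eq_iff algebra_simps)
  have "third_difference (\<lambda>x. L1 ((L2 x + d) ^ 3)) a b c
          = L1 (third_difference (\<lambda>y. (y + d) ^ 3) (L2 a) (L2 b) (L2 c))" for a b c
    using third_difference_comp_additive[OF L(1,2), of "\<lambda>y. (y + d) ^ 3"] by simp
  then have "third_difference f a b c = L1 (6 * (L2 a * L2 b * L2 c))" for a b c
    by (simp add: f_eq' third_difference_add third_difference_additive third_difference_const
        third_difference_shifted_cube L)
  then show thesis
    by (rule that)
qed

lemma CHAR_eq_of_card_eq_prime_power:
  fixes p :: nat
  assumes "prime p" and "n > 0" and "card (UNIV :: 'a::{field,finite} set) = p ^ n"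
  shows "CHAR('a) = p"
proof -
  have "prime CHAR('a)"
    by (intro prime_CHAR_semidom finite_imp_CHAR_pos) simp
  moreover have "CHAR('a) dvd p ^ n"
    using CHAR_dvd_CARD[where 'a='a] assms(3) by simp
  ultimately have "CHAR('a) dvd p"
    using prime_dvd_power by blast
  then show ?thesis
    using assms(1) \<open>prime CHAR('a)\<close> by (simp add: primes_dvd_imp_eq)
qed

lemma exists_not_fixed_by_power:
  assumes "2 \<le> Q" and "Q < card (UNIV :: 'a::{field,finite} set)"
  shows "\<exists>g::'a. g ^ Q \<noteq> g"
proof (rule ccontr)
  assume "\<nexists>g::'a. g ^ Q \<noteq> g"
  then have fixed: "\<forall>g::'a. g ^ Q = g"
    by blast
  define P :: "'a poly" where "P = monom 1 Q + [:0, -1:]"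
  have "degree P = Q"
    unfolding P_def using assms(1) by (subst degree_add_eq_left) (auto simp: degree_monom_eq)
  then have "P \<noteq> 0"
    using assms(1) by auto
  moreover have "{x. poly P x = 0} = UNIV"
    using fixed by (auto simp: P_def poly_monom)
  ultimately have "card (UNIV :: 'a set) \<le> Q"
    using card_poly_roots_bound[of P] \<open>degree P = Q\<close> by simp
  then show False
    using assms(2) by simp
qed

lemma linear_plus_power_coeffs_unique:
  fixes \<alpha> \<beta> \<alpha>' \<beta>' g :: "'a::field"
  assumes "g ^ Q \<noteq> g"
    and "\<And>c. \<alpha> * c + \<beta> * c ^ Q = \<alpha>' * c + \<beta>' * c ^ Q"
  shows "\<alpha> = \<alpha>'" and "\<beta> = \<beta>'"
proof -
  have sum_eq: "\<alpha> + \<beta> = \<alpha>' + \<beta>'"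
    using assms(2)[of 1] by simp
  then have coeff_diff: "\<beta>' - \<beta> = \<alpha> - \<alpha>'"
    by (simp add: algebra_simps)
  have "(\<beta> - \<beta>') * (g ^ Q - g) = (\<beta>' - \<beta>) * g + (\<beta> - \<beta>') * g ^ Q"
    by (simp add: algebra_simps)
  also have "\<dots> = (\<alpha> - \<alpha>') * g + (\<beta> - \<beta>') * g ^ Q"
    by (simp only: coeff_diff)
  also have "\<dots> = 0"
    using assms(2)[of g] by (simp add: algebra_simps)
  finally show "\<beta> = \<beta>'"
    using assms(1) by simp
  with sum_eq show "\<alpha> = \<alpha>'"
    by simp
qed

lemma frobenius_twisted_form_not_cubic:
  fixes L1 L2 :: "'a::{field,finite} \<Rightarrow> 'a" and g :: 'a and Q :: nat
  assumes "0 < Q" and "(2::'a) \<noteq> 0" and g: "g ^ Q \<noteq> g"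
    and cubic: "\<And>a b c. 2 * (a ^ Q * b * c + b ^ Q * a * c + c ^ Q * a * b)
                          = L1 (6 * (L2 a * L2 b * L2 c))"
  shows False
proof -
  define \<Phi> where "\<Phi> a b c = a ^ Q * b * c + b ^ Q * a * c + c ^ Q * a * b" for a b c :: 'a
  have \<Phi>_eq: "\<Phi> a b = \<Phi> a' b'" if "L2 a * L2 b = L2 a' * L2 b'" for a b a' b'
  proof
    fix c
    have "2 * \<Phi> a b c = 2 * \<Phi> a' b' c"
      using cubic[of a b c] cubic[of a' b' c] that by (simp add: \<Phi>_def mult.assoc)
    then show "\<Phi> a b c = \<Phi> a' b' c"
      using assms(2) by simp
  qed
  have \<Phi>_1: "\<Phi> 1 b c = (b + b ^ Q) * c + b * c ^ Q" for b c
    by (simp add: \<Phi>_def algebra_simps)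
  have "inj (\<lambda>b. L2 1 * L2 b)"
  proof (rule injI)
    fix b b'
    assume "L2 1 * L2 b = L2 1 * L2 b'"
    then have "(b + b ^ Q) * c + b * c ^ Q = (b' + b' ^ Q) * c + b' * c ^ Q" for c
      using \<Phi>_eq \<Phi>_1 by metis
    then show "b = b'"
      by (rule linear_plus_power_coeffs_unique(2)[OF g])
  qed
  then obtain b where "L2 1 * L2 b = L2 g * L2 (inverse g)"
    using finite_UNIV_inj_surj by (metis finite_class.finite_UNIV surjD)
  then have \<Phi>_b: "\<Phi> 1 b = \<Phi> g (inverse g)"
    by (rule \<Phi>_eq)
  have "g \<noteq> 0"
    using g \<open>0 < Q\<close> by auto
  define t where "t = g ^ Q / g"
  have "t \<noteq> 0"
    using \<open>g \<noteq> 0\<close> by (simp add: t_def)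
  have "\<Phi> g (inverse g) c = (t + inverse t) * c + 1 * c ^ Q" for c
    using \<open>g \<noteq> 0\<close> by (simp add: \<Phi>_def t_def field_simps power_inverse)
  then have "(b + b ^ Q) * c + b * c ^ Q = (t + inverse t) * c + 1 * c ^ Q" for c
    using \<Phi>_b \<Phi>_1 by metis
  then have "b = 1" and "b + b ^ Q = t + inverse t"
    using linear_plus_power_coeffs_unique[OF g] by blast+
  then have "(t - 1) ^ 2 = 0"
    using \<open>t \<noteq> 0\<close> by (simp add: power2_eq_square field_simps)
  then have "g ^ Q = g"
    using \<open>g \<noteq> 0\<close> by (simp add: t_def)
  with g show False ..
qed

theorem mainTheorem4:
  fixes p r :: nat
  assumes "prime p" and "p \<ge> 5" and "r > 0"
    and "\<not> (3 dvd (p ^ r + 1))"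
    and "card (UNIV :: 'a set) = p ^ (2 * r)"
  shows "\<not> EA_equivalent (\<lambda>x::'a::{field,finite}. x ^ (p ^ r + 2)) (\<lambda>x. x ^ 3)"
proof
  define Q where "Q = p ^ r"
  assume "EA_equivalent (\<lambda>x::'a. x ^ (p ^ r + 2)) (\<lambda>x. x ^ 3)"
  then obtain L1 L2 :: "'a \<Rightarrow> 'a"
    where cubic: "\<And>a b c. third_difference (\<lambda>x. x ^ (Q + 2)) a b c = L1 (6 * (L2 a * L2 b * L2 c))"
    unfolding Q_def by (rule EA_equivalent_cube_third_difference) blast
  have char: "CHAR('a) = p"
    using CHAR_eq_of_card_eq_prime_power[of p "2 * r"] assms(1,3,5) by simp
  have "(x + y) ^ Q = x ^ Q + y ^ Q" for x y :: 'a
    using freshmans_dream'[where 'a='a] \<open>prime p\<close> by (simp add: char Q_def)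
  then have twisted: "2 * (a ^ Q * b * c + b ^ Q * a * c + c ^ Q * a * b) = L1 (6 * (L2 a * L2 b * L2 c))"
    for a b c :: 'a
    using cubic third_difference_frobenius_twisted by metis
  have two: "(2::'a) \<noteq> 0"
    using char \<open>p \<ge> 5\<close> of_nat_eq_0_iff_char_dvd[of 2, where 'a='a] by (auto dest: dvd_imp_le)
  have "p \<le> Q"
    unfolding Q_def using \<open>p \<ge> 5\<close> \<open>r > 0\<close> by (simp add: self_le_power)
  then have "2 \<le> Q"
    using \<open>p \<ge> 5\<close> by simp
  moreover have "card (UNIV :: 'a set) = Q * Q"
    using assms(5) by (simp add: Q_def mult_2 power_add)
  ultimately obtain g :: 'a where "g ^ Q \<noteq> g"
    using exists_not_fixed_by_power[of Q] by force
  with \<open>2 \<le> Q\<close> two twisted show False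
    by (intro frobenius_twisted_form_not_cubic[of Q g L1 L2]) simp_all
qed

end
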